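(* Let $c:\mathbb{R}^n\times\mathbb{R}^n\to[0,\infty)$ be continuously differentiable and satisfy the twist condition: for every $x_0\in\mathbb{R}^n$ the map $y\mapsto\nabla_x c(x_0,y)$ is injective. Then $c$ satisfies the Local Metric Twist Condition [LMTC] in the metric measure space $(\mathbb{R}^n,\mathsf{d}_{\mathrm{Euc}},\mathscr{L}^n)$.
   Context: For $x,y,z\in\mathsf{X}$, $s,r>0$, set $F_{s|r}(x|y,z):=\{x'\in B_s(x): c(x',y')+c(x,z')<c(x,y')+c(x',z')\ \ \forall y'\in B_r(y),\,z'\in B_r(z)\}$. In a metric measure space $(\mathsf{X},\mathsf{d},\mathfrak{m})$, $c$ satisfies [LMTC] if for every $x,y,z\in\mathsf{X}$ with $y\ne z$ there exist $r_1,r_2>0$ such that for every $\bar x\in B_{r_1}(x)$, $\liminf_{s\to0}\frac{\mathfrak{m}(F_{s|r_2}(\bar x|y,z))}{\mathfrak{m}(B_s(\bar x))}>0$. Here $\mathfrak{m}=\mathscr{L}^n$ is Lebesgue measure and balls are Euclidean. *)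

theory Defs
  imports "HOL-Analysis.Analysis"
begin

definition F_set :: "('a::metric_space \<Rightarrow> 'a \<Rightarrow> real) \<Rightarrow> real \<Rightarrow> real \<Rightarrow> 'a \<Rightarrow> 'a \<Rightarrow> 'a \<Rightarrow> 'a set" where
  "F_set c s r x y z = {x' \<in> ball x s. \<forall>y'\<in>ball y r. \<forall>z'\<in>ball z r.
      c x' y' + c x z' < c x y' + c x' z'}"

definition LMTC :: "('a::metric_space \<Rightarrow> 'a \<Rightarrow> real) \<Rightarrow> 'a measure \<Rightarrow> bool" where
  "LMTC c m \<longleftrightarrow> (\<forall>x y z. y \<noteq> z \<longrightarrow>
     (\<exists>r1>0. \<exists>r2>0. \<forall>xb\<in>ball x r1.
        Liminf (at_right (0::real))
          (\<lambda>s. ereal (measure m (F_set c s r2 xb y z) / measure m (ball xb s))) > 0))"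

definition grad_x :: "('a::euclidean_space \<Rightarrow> 'a \<Rightarrow> real) \<Rightarrow> 'a \<Rightarrow> 'a \<Rightarrow> 'a" where
  "grad_x c x y = (SOME g. ((\<lambda>x'. c x' y) has_derivative (\<lambda>h. g \<bullet> h)) (at x))"

end

theory Submission
  imports Defs
begin

text \<open>By the twist condition \<open>v = \<nabla>\<^sub>xc(x,z) - \<nabla>\<^sub>xc(x,y) \<noteq> 0\<close>, and by
  continuity of the partial gradient, \<open>x' \<mapsto> c(x',z') - c(x',y')\<close> has gradient within \<open>|v|/4\<close>
  of \<open>v\<close> for \<open>x'\<close> near \<open>x\<close> and \<open>y', z'\<close> near \<open>y, z\<close>. By the mean value theorem this function
  then increases from \<open>x\<^sub>0\<close> to every point of the ball of radius \<open>s/8\<close> around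
  \<open>x\<^sub>0 + (s/2|v|) v\<close>, which is exactly the inequality defining \<open>F\<^sub>s\<^sub>|\<^sub>r(x\<^sub>0|y,z)\<close>. So that ball lies
  in \<open>F\<^sub>s\<^sub>|\<^sub>r(x\<^sub>0|y,z)\<close>, and the density ratio is at least \<open>8\<^sup>-\<^sup>n\<close>.\<close>

lemma linear_functional_eq_inner:
  fixes f :: "'a::euclidean_space \<Rightarrow> real"
  assumes "linear f"
  shows "f = (\<lambda>h. adjoint f 1 \<bullet> h)"
  using adjoint_works[OF assms, of _ 1] by (auto simp: inner_commute)

lemma grad_x_inner:
  fixes c :: "'a::euclidean_space \<Rightarrow> 'a \<Rightarrow> real"
  assumes L: "((\<lambda>x'. c x' y) has_derivative L) (at x)"
  shows "grad_x c x y \<bullet> h = L h"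
proof -
  have "((\<lambda>x'. c x' y) has_derivative (\<lambda>h. adjoint L 1 \<bullet> h)) (at x)"
    using L linear_functional_eq_inner[OF has_derivative_linear[OF L]] by simp
  then have "((\<lambda>x'. c x' y) has_derivative (\<lambda>h. grad_x c x y \<bullet> h)) (at x)"
    unfolding grad_x_def by (rule someI)
  then have "(\<lambda>h. grad_x c x y \<bullet> h) = L"
    using L by (rule has_derivative_unique)
  then show ?thesis by metis
qed

lemma has_derivative_grad_x:
  fixes c :: "'a::euclidean_space \<Rightarrow> 'a \<Rightarrow> real"
  assumes "((\<lambda>x'. c x' y) has_derivative L) (at x)"
  shows "((\<lambda>x'. c x' y) has_derivative (\<lambda>h. grad_x c x y \<bullet> h)) (at x)"
  using assms by (simp add: grad_x_inner[of c, OF assms])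

lemma has_derivative_partial_fst:
  assumes "((\<lambda>q. f (fst q) (snd q)) has_derivative L) (at (x, y))"
  shows "((\<lambda>x'. f x' y) has_derivative (\<lambda>h. L (h, 0))) (at x)"
proof -
  have "((\<lambda>x'. (x', y)) has_derivative (\<lambda>h. (h, 0))) (at x)"
    by (intro has_derivative_Pair has_derivative_ident has_derivative_const)
  from has_derivative_compose[OF this assms] show ?thesis by simp
qed

lemma continuous_on_grad_x:
  fixes c :: "'a::euclidean_space \<Rightarrow> 'a \<Rightarrow> real"
  assumes D: "\<And>p. ((\<lambda>q. c (fst q) (snd q)) has_derivative blinfun_apply (D p)) (at p)"
    and "continuous_on UNIV D"
  shows "continuous_on UNIV (\<lambda>q. grad_x c (fst q) (snd q))"
proof -
  have "grad_x c (fst q) (snd q) = (\<Sum>b\<in>Basis. blinfun_apply (D q) (b, 0) *\<^sub>R b)" for q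
    using grad_x_inner[of c, OF has_derivative_partial_fst[OF D[of "(fst q, snd q)"]]]
    by (subst euclidean_representation[symmetric]) (simp add: inner_commute)
  moreover have "continuous_on UNIV (\<lambda>q. \<Sum>b\<in>Basis. blinfun_apply (D q) (b, 0) *\<^sub>R b)"
    using assms(2) by (intro continuous_intros)
  ultimately show ?thesis by simp
qed

lemma continuous_on_curried_dist_lessE:
  fixes G :: "'a::real_normed_vector \<Rightarrow> 'b::real_normed_vector \<Rightarrow> 'c::metric_space"
  assumes "continuous_on UNIV (\<lambda>q. G (fst q) (snd q))" and "e > 0"
  obtains \<delta> where "\<delta> > 0" "\<And>p w. dist p x < \<delta> \<Longrightarrow> dist w y < \<delta> \<Longrightarrow> dist (G p w) (G x y) < e"
proof -
  obtain d where d: "d > 0" "\<And>q. dist q (x, y) < d \<Longrightarrow> dist (G (fst q) (snd q)) (G x y) < e"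
    using assms unfolding continuous_on_iff by (metis UNIV_I fst_conv snd_conv)
  have "dist (p, w) (x, y) < d" if "dist p x < d/2" "dist w y < d/2" for p w
    using norm_Pair_le[of "p - x" "w - y"] that by (simp add: dist_norm)
  then show ?thesis using d by (intro that[of "d/2"]) auto
qed

lemma open_Collect_forall_compact:
  fixes f :: "'a::topological_space \<times> 'b::topological_space \<Rightarrow> real"
  assumes "continuous_on UNIV f" and "compact K"
  shows "open {x. \<forall>p\<in>K. 0 < f (x, p)}"
proof (subst open_subopen, intro ballI)
  fix x0 assume "x0 \<in> {x. \<forall>p\<in>K. 0 < f (x, p)}"
  then have "{x0} \<times> K \<subseteq> {q. 0 < f q}" by auto
  moreover have "open {q. 0 < f q}"
    using assms(1) by (intro open_Collect_less continuous_on_const) auto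
  ultimately obtain X0 where "x0 \<in> X0" "open X0" "X0 \<times> K \<subseteq> {q. 0 < f q}"
    using Elementary_Topology.tube_lemma[OF assms(2)] by metis
  then show "\<exists>T. open T \<and> x0 \<in> T \<and> T \<subseteq> {x. \<forall>p\<in>K. 0 < f (x, p)}" by blast
qed

lemma borel_Collect_forall_Union_compact:
  fixes f :: "'a::topological_space \<times> 'b::topological_space \<Rightarrow> real"
    and K :: "'i::countable \<Rightarrow> 'b set"
  assumes "continuous_on UNIV f" and "\<And>i. compact (K i)"
  shows "{x. \<forall>p\<in>(\<Union>i. K i). 0 < f (x, p)} \<in> sets borel"
proof -
  have "{x. \<forall>p\<in>(\<Union>i. K i). 0 < f (x, p)} = (\<Inter>i. {x. \<forall>p\<in>K i. 0 < f (x, p)})" by blast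
  also have "\<dots> \<in> sets borel"
    using open_Collect_forall_compact[OF assms] by (intro sets.countable_INT') auto
  finally show ?thesis .
qed

lemma ball_eq_Union_cball:
  fixes y :: "'a::metric_space"
  shows "ball y r = (\<Union>k. cball y (r - 1 / Suc k))"
proof (intro equalityI subsetI)
  fix w assume "w \<in> ball y r"
  then obtain k where "inverse (real (Suc k)) < r - dist y w"
    using reals_Archimedean by (metis diff_gt_0_iff_gt mem_ball)
  then have "dist y w \<le> r - 1 / Suc k" by (simp add: inverse_eq_divide)
  then show "w \<in> (\<Union>k. cball y (r - 1 / Suc k))" by auto
next
  fix w assume "w \<in> (\<Union>k. cball y (r - 1 / Suc k))"
  then obtain k where "dist y w \<le> r - 1 / Suc k" by auto
  moreover have "0 < 1 / real (Suc k)" by simp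
  ultimately have "dist y w < r" by linarith
  then show "w \<in> ball y r" by simp
qed

lemma sets_F_set:
  fixes c :: "'a::euclidean_space \<Rightarrow> 'a \<Rightarrow> real"
  assumes c: "continuous_on UNIV (\<lambda>q. c (fst q) (snd q))"
  shows "F_set c s r x y z \<in> sets borel"
proof -
  define f where "f = (\<lambda>(x', y', z'). (c x y' + c x' z') - (c x' y' + c x z'))"
  define K :: "nat \<times> nat \<Rightarrow> ('a \<times> 'a) set"
    where "K = (\<lambda>(i, j). cball y (r - 1 / Suc i) \<times> cball z (r - 1 / Suc j))"
  have "ball y r \<times> ball z r = (\<Union>k. K k)"
    unfolding K_def ball_eq_Union_cball[of y] ball_eq_Union_cball[of z] by auto
  moreover have "F_set c s r x y z = ball x s \<inter> {x'. \<forall>p\<in>ball y r \<times> ball z r. 0 < f (x', p)}"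
    unfolding F_set_def f_def by (auto simp: diff_gt_0_iff_gt)
  ultimately have F: "F_set c s r x y z = ball x s \<inter> {x'. \<forall>p\<in>(\<Union>k. K k). 0 < f (x', p)}"
    by simp
  have "continuous_on UNIV f"
  proof -
    have cc: "continuous_on UNIV (\<lambda>q. c (g q) (h q))"
      if "continuous_on UNIV g" "continuous_on UNIV h" for g h :: "'a \<times> 'a \<times> 'a \<Rightarrow> 'a"
      using continuous_on_compose2[OF c continuous_on_Pair[OF that]] by simp
    show ?thesis unfolding f_def split_def by (intro continuous_intros cc)
  qed
  moreover have "compact (K k)" for k
    by (cases k) (simp add: K_def compact_Times)
  ultimately have "{x'. \<forall>p\<in>(\<Union>k. K k). 0 < f (x', p)} \<in> sets borel"
    by (rule borel_Collect_forall_Union_compact)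
  then show ?thesis unfolding F by (intro sets.Int) auto
qed

lemma grad_difference_near:
  fixes G :: "'a::real_normed_vector \<Rightarrow> 'a \<Rightarrow> 'b::real_normed_vector"
  assumes "continuous_on UNIV (\<lambda>q. G (fst q) (snd q))" and "e > 0"
  obtains \<delta> where "\<delta> > 0"
    "\<And>p y' z'. dist p x < \<delta> \<Longrightarrow> dist y' y < \<delta> \<Longrightarrow> dist z' z < \<delta> \<Longrightarrow>
       norm (G p z' - G p y' - (G x z - G x y)) < e"
proof -
  obtain \<delta>y where \<delta>y: "\<delta>y > 0" "\<And>p w. dist p x < \<delta>y \<Longrightarrow> dist w y < \<delta>y \<Longrightarrow> dist (G p w) (G x y) < e/2"
    using continuous_on_curried_dist_lessE[OF assms(1) half_gt_zero[OF assms(2)], where x = x and y = y] by blast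
  obtain \<delta>z where \<delta>z: "\<delta>z > 0" "\<And>p w. dist p x < \<delta>z \<Longrightarrow> dist w z < \<delta>z \<Longrightarrow> dist (G p w) (G x z) < e/2"
    using continuous_on_curried_dist_lessE[OF assms(1) half_gt_zero[OF assms(2)], where x = x and y = z] by blast
  show ?thesis
  proof (rule that[of "min \<delta>y \<delta>z"])
    fix p y' z' assume "dist p x < min \<delta>y \<delta>z" "dist y' y < min \<delta>y \<delta>z" "dist z' z < min \<delta>y \<delta>z"
    then have "norm (G p z' - G x z) < e/2" "norm (G p y' - G x y) < e/2"
      using \<delta>y(2) \<delta>z(2) by (auto simp: dist_norm)
    then show "norm (G p z' - G p y' - (G x z - G x y)) < e"
      using norm_triangle_ineq4[of "G p z' - G x z" "G p y' - G x y"]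
      by (simp add: algebra_simps)
  qed (use \<delta>y \<delta>z in auto)
qed

lemma norm_inner_bounds_near_ray:
  fixes v h :: "'a::real_inner"
  assumes "v \<noteq> 0" and near: "norm (h - (s / (2 * norm v)) *\<^sub>R v) < s / 8"
  shows "norm h < 5 * s / 8" and "3 * s * norm v / 8 < v \<bullet> h"
proof -
  define u where "u = (s / (2 * norm v)) *\<^sub>R v"
  define k where "k = h - u"
  have k: "norm k < s / 8" using near unfolding k_def u_def .
  then have s: "s > 0" using norm_ge_zero[of k] by linarith
  have nv: "norm v > 0" using assms(1) by simp
  have h: "h = u + k" unfolding k_def by simp
  have "norm u = s / 2" unfolding u_def using s nv by simp
  then show "norm h < 5 * s / 8"
    using norm_triangle_ineq[of u k] k unfolding h by linarith
  have "v \<bullet> u = s / 2 * norm v"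
    unfolding u_def using nv by (simp add: power2_norm_eq_inner[symmetric] power2_eq_square)
  moreover have "norm v * norm k < norm v * (s / 8)"
    using k nv by (intro mult_strict_left_mono)
  moreover have "3 * s * norm v / 8 = s / 2 * norm v - norm v * (s / 8)"
    by (simp add: field_simps)
  ultimately show "3 * s * norm v / 8 < v \<bullet> h"
    using Cauchy_Schwarz_ineq2[of v k] unfolding h inner_add_right by linarith
qed

lemma less_if_derivative_pos_on_segment:
  fixes g :: "'a::real_normed_vector \<Rightarrow> real"
  assumes deriv: "\<And>p. p \<in> closed_segment a b \<Longrightarrow> (g has_derivative g' p) (at p)"
    and pos: "\<And>p. p \<in> closed_segment a b \<Longrightarrow> 0 < g' p (b - a)"
  shows "g a < g b"
proof -
  define \<gamma> where "\<gamma> = (\<lambda>t::real. a + t *\<^sub>R (b - a))"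
  have seg: "\<gamma> t \<in> closed_segment a b" if "t \<in> {0..1}" for t
    using that unfolding \<gamma>_def closed_segment_def
    by (auto simp: algebra_simps intro!: exI[of _ t])
  have "((g \<circ> \<gamma>) has_derivative (g' (\<gamma> t) \<circ> (\<lambda>d. d *\<^sub>R (b - a)))) (at t within {0..1})"
    if "t \<in> {0..1}" for t
  proof -
    have "(\<gamma> has_derivative (\<lambda>d. d *\<^sub>R (b - a))) (at t)"
      unfolding \<gamma>_def by (auto intro!: derivative_eq_intros)
    from diff_chain_at[OF this deriv[OF seg[OF that]]] show ?thesis
      by (rule has_derivative_at_withinI)
  qed
  then obtain t where "t \<in> {0<..<1}" "(g \<circ> \<gamma>) 1 - (g \<circ> \<gamma>) 0 = g' (\<gamma> t) (1 *\<^sub>R (b - a))"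
    using mvt_simple[of 0 1 "g \<circ> \<gamma>" "\<lambda>t. g' (\<gamma> t) \<circ> (\<lambda>d. d *\<^sub>R (b - a))"] by auto
  moreover have "\<gamma> 0 = a" "\<gamma> 1 = b" unfolding \<gamma>_def by simp_all
  ultimately show ?thesis using pos[OF seg[of t]] by simp
qed

lemma ball_subset_F_set:
  fixes c :: "'a::euclidean_space \<Rightarrow> 'a \<Rightarrow> real" and G :: "'a \<Rightarrow> 'a \<Rightarrow> 'a"
  assumes deriv: "\<And>p w. ((\<lambda>x'. c x' w) has_derivative (\<lambda>h. G p w \<bullet> h)) (at p)"
    and v: "v \<noteq> 0"
    and near: "\<And>p y' z'. p \<in> ball x s \<Longrightarrow> y' \<in> ball y r \<Longrightarrow> z' \<in> ball z r \<Longrightarrow>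
                 norm (G p z' - G p y' - v) \<le> norm v / 4"
  shows "ball (x + (s / (2 * norm v)) *\<^sub>R v) (s / 8) \<subseteq> F_set c s r x y z"
proof
  fix x' assume "x' \<in> ball (x + (s / (2 * norm v)) *\<^sub>R v) (s / 8)"
  then have "norm ((x' - x) - (s / (2 * norm v)) *\<^sub>R v) < s / 8"
    by (simp add: dist_norm norm_minus_commute algebra_simps)
  note bounds = norm_inner_bounds_near_ray[OF v this]
  have s: "s > 0" using bounds(1) norm_ge_zero[of "x' - x"] by linarith
  have "norm (x' - x) < s" using bounds(1) s by linarith
  then have x': "x' \<in> ball x s" by (simp add: dist_norm norm_minus_commute)
  have seg: "closed_segment x x' \<subseteq> ball x s"
    using x' s by (intro closed_segment_subset convex_ball) auto
  have margin: "norm v / 4 * (5 * s / 8) < 3 * s * norm v / 8"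
    using s v by (simp add: field_simps)
  have "c x z' - c x y' < c x' z' - c x' y'" if "y' \<in> ball y r" "z' \<in> ball z r" for y' z'
  proof (rule less_if_derivative_pos_on_segment[where g' = "\<lambda>p h. (G p z' - G p y') \<bullet> h"])
    fix p assume "p \<in> closed_segment x x'"
    with seg have p: "p \<in> ball x s" by blast
    show "((\<lambda>x'. c x' z' - c x' y') has_derivative (\<lambda>h. (G p z' - G p y') \<bullet> h)) (at p)"
      using has_derivative_diff[OF deriv deriv] by (simp add: inner_diff_left)
    have "\<bar>(G p z' - G p y' - v) \<bullet> (x' - x)\<bar> \<le> norm (G p z' - G p y' - v) * norm (x' - x)"
      by (rule Cauchy_Schwarz_ineq2)
    also have "\<dots> \<le> norm v / 4 * norm (x' - x)"
      using near[OF p that] by (intro mult_right_mono) auto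
    also have "\<dots> \<le> norm v / 4 * (5 * s / 8)"
      using bounds(1) v by (intro mult_left_mono) auto
    finally show "0 < (G p z' - G p y') \<bullet> (x' - x)"
      using bounds(2) margin by (simp only: inner_diff_left)
  qed
  with x' show "x' \<in> F_set c s r x y z" unfolding F_set_def by (simp add: algebra_simps)
qed

lemma Liminf_measure_ratio_pos:
  fixes x :: "'a::euclidean_space" and A :: "real \<Rightarrow> 'a set"
  assumes "r > 0" and "\<kappa> > 0"
    and inner: "\<And>s. 0 < s \<Longrightarrow> s < r \<Longrightarrow> \<exists>a. ball a (\<kappa> * s) \<subseteq> A s"
    and meas: "\<And>s. A s \<in> sets lebesgue" and sub: "\<And>s. A s \<subseteq> ball x s"
  shows "0 < Liminf (at_right 0) (\<lambda>s. ereal (measure lebesgue (A s) / measure lebesgue (ball x s)))"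
proof -
  let ?U = "measure lborel (ball (0::'a) 1)"
  have U: "?U > 0" by (rule content_ball_pos) simp
  have mball: "measure lebesgue (ball w t) = t ^ DIM('a) * ?U" if "t \<ge> 0" for w :: 'a and t
    using content_ball_conv_unit_ball[OF that, of w] by simp
  have ratio: "\<kappa> ^ DIM('a) \<le> measure lebesgue (A s) / measure lebesgue (ball x s)"
    if s: "0 < s" "s < r" for s
  proof -
    obtain a where a: "ball a (\<kappa> * s) \<subseteq> A s" using inner s by blast
    have "A s \<in> fmeasurable lebesgue" by (rule fmeasurableI2[OF lmeasurable_ball sub meas])
    then have "measure lebesgue (ball a (\<kappa> * s)) \<le> measure lebesgue (A s)"
      using a by (intro measure_mono_fmeasurable) auto
    then have "\<kappa> ^ DIM('a) * measure lebesgue (ball x s) \<le> measure lebesgue (A s)"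
      using mball[of "\<kappa> * s"] mball[of s] s \<open>\<kappa> > 0\<close> by (simp add: power_mult_distrib mult.assoc)
    moreover have "measure lebesgue (ball x s) > 0" using mball[of s] s U by simp
    ultimately show ?thesis by (simp add: pos_le_divide_eq)
  qed
  have "eventually (\<lambda>s. s \<in> {0<..<r}) (at_right 0)"
    using \<open>r > 0\<close> by (intro eventually_at_right_real) simp
  then have "eventually (\<lambda>s. ereal (\<kappa> ^ DIM('a)) \<le>
      ereal (measure lebesgue (A s) / measure lebesgue (ball x s))) (at_right 0)"
    by (rule eventually_mono) (use ratio in auto)
  then have "ereal (\<kappa> ^ DIM('a)) \<le>
      Liminf (at_right 0) (\<lambda>s. ereal (measure lebesgue (A s) / measure lebesgue (ball x s)))"
    by (rule Liminf_bounded)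
  moreover have "0 < ereal (\<kappa> ^ DIM('a))" using \<open>\<kappa> > 0\<close> by simp
  ultimately show ?thesis by order
qed

lemma Liminf_F_set_ratio_pos:
  fixes c :: "'a::euclidean_space \<Rightarrow> 'a \<Rightarrow> real" and G :: "'a \<Rightarrow> 'a \<Rightarrow> 'a"
  assumes c: "continuous_on UNIV (\<lambda>q. c (fst q) (snd q))"
    and deriv: "\<And>p w. ((\<lambda>x'. c x' w) has_derivative (\<lambda>h. G p w \<bullet> h)) (at p)"
    and v: "v \<noteq> 0" and "\<delta> > 0"
    and near: "\<And>p y' z'. dist p x < \<delta> \<Longrightarrow> dist y' y < \<delta> \<Longrightarrow> dist z' z < \<delta> \<Longrightarrow>
                 norm (G p z' - G p y' - v) < norm v / 4"
    and xb: "xb \<in> ball x (\<delta> / 2)"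
  shows "0 < Liminf (at_right 0)
           (\<lambda>s. ereal (measure lebesgue (F_set c s (\<delta> / 2) xb y z) / measure lebesgue (ball xb s)))"
proof (rule Liminf_measure_ratio_pos[where \<kappa> = "1/8" and r = "\<delta> / 2"])
  fix s assume "0 < s" "s < \<delta> / 2"
  have "ball (xb + (s / (2 * norm v)) *\<^sub>R v) (s / 8) \<subseteq> F_set c s (\<delta> / 2) xb y z"
  proof (rule ball_subset_F_set[OF deriv v])
    fix p y' z' assume "p \<in> ball xb s" "y' \<in> ball y (\<delta> / 2)" "z' \<in> ball z (\<delta> / 2)"
    with xb \<open>s < \<delta> / 2\<close> show "norm (G p z' - G p y' - v) \<le> norm v / 4"
      by (intro less_imp_le near) metric+
  qed
  then show "\<exists>a. ball a (1/8 * s) \<subseteq> F_set c s (\<delta> / 2) xb y z" by auto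
next
  show "F_set c s (\<delta> / 2) xb y z \<in> sets lebesgue" for s using sets_F_set[OF c] by simp
  show "F_set c s (\<delta> / 2) xb y z \<subseteq> ball xb s" for s by (auto simp: F_set_def)
qed (use \<open>\<delta> > 0\<close> in auto)

theorem mainTheorem3:
  fixes c :: "'a::euclidean_space \<Rightarrow> 'a \<Rightarrow> real"
  assumes nonneg: "\<And>x y. c x y \<ge> 0"
    and C1: "\<exists>D :: 'a \<times> 'a \<Rightarrow> ('a \<times> 'a) \<Rightarrow>\<^sub>L real.
               (\<forall>p. ((\<lambda>q. c (fst q) (snd q)) has_derivative blinfun_apply (D p)) (at p))
               \<and> continuous_on UNIV D"
    and twist: "\<And>x0. inj (\<lambda>y. grad_x c x0 y)"
  shows "LMTC c lebesgue"
proof -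
  obtain D :: "'a \<times> 'a \<Rightarrow> ('a \<times> 'a) \<Rightarrow>\<^sub>L real" where
    D: "\<And>p. ((\<lambda>q. c (fst q) (snd q)) has_derivative blinfun_apply (D p)) (at p)"
    and "continuous_on UNIV D" using C1 by blast
  have deriv: "((\<lambda>x'. c x' w) has_derivative (\<lambda>h. grad_x c p w \<bullet> h)) (at p)" for p w
    using has_derivative_grad_x[OF has_derivative_partial_fst[OF D]] .
  have G: "continuous_on UNIV (\<lambda>q. grad_x c (fst q) (snd q))"
    by (rule continuous_on_grad_x[OF D \<open>continuous_on UNIV D\<close>])
  have c: "continuous_on UNIV (\<lambda>q. c (fst q) (snd q))"
    using D by (intro continuous_at_imp_continuous_on ballI has_derivative_continuous)
  show ?thesis unfolding LMTC_def
  proof (intro allI impI)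
    fix x y z :: 'a assume "y \<noteq> z"
    define v where "v = grad_x c x z - grad_x c x y"
    have v: "v \<noteq> 0" using twist[of x] \<open>y \<noteq> z\<close> unfolding inj_def v_def by auto
    then obtain \<delta> where "\<delta> > 0" and \<delta>: "\<And>p y' z'. dist p x < \<delta> \<Longrightarrow> dist y' y < \<delta> \<Longrightarrow>
        dist z' z < \<delta> \<Longrightarrow> norm (grad_x c p z' - grad_x c p y' - v) < norm v / 4"
      using grad_difference_near[OF G, of "norm v / 4" x y z] unfolding v_def by auto
    then show "\<exists>r1>0. \<exists>r2>0. \<forall>xb\<in>ball x r1. Liminf (at_right 0)
        (\<lambda>s. ereal (measure lebesgue (F_set c s r2 xb y z) / measure lebesgue (ball xb s))) > 0"
      using Liminf_F_set_ratio_pos[OF c deriv v \<open>\<delta> > 0\<close> \<delta>] \<open>\<delta> > 0\<close>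
      by (intro exI[of _ "\<delta> / 2"] conjI ballI) auto
  qed
qed

end
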